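(* Let $G$ be a ribbon graph whose underlying surface is oriented, and let $\widetilde L_G$ be the natural diagram of the medial alternating link $L_G\subset G\times I$ (all notions as defined in the context). Then $$\langle \widetilde L_G\rangle(A,B,d) \;=\; A^{r(G)}\,B^{n(G)}\,d^{k(G)-1}\,R_G\!\left(\frac{Bd}{A},\,\frac{Ad}{B},\,\frac{1}{d}\right).$$
   Context: A ribbon graph $G$ is a graph $\Gamma=(V,E)$ (loops and multiple edges allowed) with a fixed cyclic order of the edge-ends at each vertex; equivalently a compact surface with boundary that is a union of closed discs for vertices and closed discs ("ribbons") for edges, such that these discs meet in disjoint line segments, each segment lies on the boundary of exactly one vertex disc and one edge ribbon, and each edge ribbon contains exactly two such segments. We use the same letter $G$ for the surface, assumed oriented (orientation given by counterclockwise rotation). For a ribbon graph $F$: $v(F)$ = number of vertices, $e(F)$ = number of edges, $k(F)$ = number of connected components, $r(F)=v(F)-k(F)$ (rank), $n(F)=e(F)-r(F)$ (nullity), $\mathrm{bc}(F)$ = number of boundary components of the surface $F$. A spanning subgraph of $G$ is a ribbon subgraph containing all vertices and a subset of the edges; $\mathcal F(G)$ is the set of spanning subgraphs. The Bollobás–Riordan polynomial is $$R_G(x,y,z)=\sum_{F\in\mathcal F(G)} x^{r(G)-r(F)}\,y^{n(F)}\,z^{k(F)-\mathrm{bc}(F)+n(F)}.$$ Link diagrams: $I=[0,1]$; a link $L\subset G\times I$ in general position w.r.t. the projection $\pi:G\times I\to G$ has a diagram $\widetilde L$: the immersed curve $\pi(L)$ with finitely many transverse double points, each marked with over/undercrossing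 information. At a crossing, the $A$-splitting joins the two local regions swept out by the overcrossing arc when it is rotated according to the orientation of $G$ (counterclockwise) until it reaches the undercrossing arc; the $B$-splitting joins the other two regions. A state $S$ is a choice of $A$- or $B$-splitting at every crossing; $\alpha(S),\beta(S)$ are the numbers of $A$- and $B$-splittings, and $\delta(S)$ is the number of connected components of the resulting curve on $G$. The Kauffman bracket is $\langle\widetilde L\rangle(A,B,d)=\sum_S A^{\alpha(S)}B^{\beta(S)}d^{\delta(S)-1}$, the sum over all states. Medial alternating link: the medial graph $H_G$ is embedded in the surface $G$ with one 4-valent vertex at the middle of each edge ribbon; its edges run along the edge ribbons and, on reaching a vertex disc, turn to the next edge ribbon in the cyclic order at that vertex. Colour the regions of $G\setminus H_G$ black if they contain a vertex of $\Gamma$ and white otherwise. The natural diagram $\widetilde L_G$ is obtained from $H_G$ by making each vertex a crossing so that the overcrossing branch, rotated according to the orientation of $G$ until it reaches the undercrossing branch, sweeps out the black regions; $L_G\subset G\times I$ is the corresponding link. *)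

theory Defs
  imports "HOL-Combinatorics.Permutations"
begin

(* V : vertices, D : darts (edge-ends), vert h : vertex at which dart h sits,
   alpha : fixed-point-free involution pairing the two ends of an edge,
   sigma : counterclockwise successor of a dart in the cyclic order at its vertex
   (one sigma-cycle per vertex having darts; vertices without darts are allowed).
   --------------------------------------------------------------------- *)

definition ribbon_graph ::
  "'v set \<Rightarrow> 'd set \<Rightarrow> ('d \<Rightarrow> 'v) \<Rightarrow> ('d \<Rightarrow> 'd) \<Rightarrow> ('d \<Rightarrow> 'd) \<Rightarrow> bool" where
  "ribbon_graph V D vert alpha sigma \<longleftrightarrow>
     finite V \<and> finite D \<and> alpha permutes D \<and> sigma permutes D \<and>
     (\<forall>h\<in>D. alpha h \<noteq> h \<and> alpha (alpha h) = h) \<and>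
     (\<forall>h\<in>D. vert h \<in> V \<and> vert (sigma h) = vert h) \<and>
     (\<forall>h\<in>D. \<forall>h'\<in>D. vert h = vert h' \<longrightarrow> (\<exists>n. (sigma ^^ n) h = h'))"

definition rg_edges :: "('d \<Rightarrow> 'd) \<Rightarrow> 'd set \<Rightarrow> 'd set set" where
  "rg_edges alpha S = (\<lambda>h. {h, alpha h}) ` S"

(* spanning subgraphs = all vertices + a set of edges, i.e. an alpha-closed set of darts *)
definition spanning_subgraphs :: "('d \<Rightarrow> 'd) \<Rightarrow> 'd set \<Rightarrow> 'd set set" where
  "spanning_subgraphs alpha D = {S. S \<subseteq> D \<and> alpha ` S \<subseteq> S}"

definition rg_adj :: "('d \<Rightarrow> 'v) \<Rightarrow> ('d \<Rightarrow> 'd) \<Rightarrow> 'd set \<Rightarrow> ('v \<times> 'v) set" where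
  "rg_adj vert alpha S = {(vert h, vert (alpha h)) | h. h \<in> S}"

definition rg_k :: "'v set \<Rightarrow> ('d \<Rightarrow> 'v) \<Rightarrow> ('d \<Rightarrow> 'd) \<Rightarrow> 'd set \<Rightarrow> nat" where
  "rg_k V vert alpha S = card ((\<lambda>v. {w. (v, w) \<in> (rg_adj vert alpha S)\<^sup>*}) ` V)"

definition rg_r :: "'v set \<Rightarrow> ('d \<Rightarrow> 'v) \<Rightarrow> ('d \<Rightarrow> 'd) \<Rightarrow> 'd set \<Rightarrow> int" where
  "rg_r V vert alpha S = int (card V) - int (rg_k V vert alpha S)"

definition rg_n :: "'v set \<Rightarrow> ('d \<Rightarrow> 'v) \<Rightarrow> ('d \<Rightarrow> 'd) \<Rightarrow> 'd set \<Rightarrow> int" where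
  "rg_n V vert alpha S = int (card (rg_edges alpha S)) - rg_r V vert alpha S"

(* rotation of the ribbon subgraph with dart set S: next dart of S counterclockwise *)
definition restr_rot :: "('d \<Rightarrow> 'd) \<Rightarrow> 'd set \<Rightarrow> 'd \<Rightarrow> 'd" where
  "restr_rot sigma S h = (sigma ^^ (LEAST m. 0 < m \<and> (sigma ^^ m) h \<in> S)) h"

(* bc(F): boundary components = orbits of the face permutation (restr_rot o alpha)
   on the darts of F, plus one boundary circle for each vertex of F without darts *)
definition rg_bc :: "'v set \<Rightarrow> ('d \<Rightarrow> 'v) \<Rightarrow> ('d \<Rightarrow> 'd) \<Rightarrow> ('d \<Rightarrow> 'd) \<Rightarrow> 'd set \<Rightarrow> nat" where
  "rg_bc V vert alpha sigma S =
     card ((\<lambda>h. {((restr_rot sigma S \<circ> alpha) ^^ n) h | n. True}) ` S)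
     + card {v \<in> V. \<forall>h\<in>S. vert h \<noteq> v}"

(* Bollobas--Riordan polynomial evaluated at (x,y,z); all exponents are >= 0 *)
definition BR_poly ::
  "'v set \<Rightarrow> 'd set \<Rightarrow> ('d \<Rightarrow> 'v) \<Rightarrow> ('d \<Rightarrow> 'd) \<Rightarrow> ('d \<Rightarrow> 'd) \<Rightarrow> 'a \<Rightarrow> 'a \<Rightarrow> 'a \<Rightarrow> 'a::field" where
  "BR_poly V D vert alpha sigma x y z =
     (\<Sum>S\<in>spanning_subgraphs alpha D.
        x powi (rg_r V vert alpha D - rg_r V vert alpha S)
      * y powi (rg_n V vert alpha S)
      * z powi (int (rg_k V vert alpha S) - int (rg_bc V vert alpha sigma S) + rg_n V vert alpha S))"

(* A crossing is (arms, i): arms = the four arm-ends at the crossing listed in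
   counterclockwise order; region j (j<4) is the local region between arms j and
   j+1 (mod 4); the overcrossing strand is {arms!i, arms!(i+2)}.  Rotating the
   overcrossing strand counterclockwise until it reaches the undercrossing sweeps
   out regions i and i+2.
   --------------------------------------------------------------------- *)

(* the splitting joining regions j and j+2: reconnect arms j+1 with j+2 and j+3 with j *)
definition join_regions :: "'e list \<Rightarrow> nat \<Rightarrow> ('e \<times> 'e) set" where
  "join_regions arms j =
     {(arms ! ((j + 1) mod 4), arms ! ((j + 2) mod 4)), (arms ! ((j + 3) mod 4), arms ! (j mod 4))}"

definition A_split :: "'e list \<times> nat \<Rightarrow> ('e \<times> 'e) set" where
  "A_split c = join_regions (fst c) (snd c)"

definition B_split :: "'e list \<times> nat \<Rightarrow> ('e \<times> 'e) set" where
  "B_split c = join_regions (fst c) (snd c + 1)"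

definition n_components :: "'e set \<Rightarrow> ('e \<times> 'e) set \<Rightarrow> nat" where
  "n_components X R = card ((\<lambda>x. {y. (x, y) \<in> (R \<union> R\<inverse>)\<^sup>*}) ` X)"

(* A diagram: crossings indexed by C, cr c = the crossing data, Ends = all arm-ends,
   arcs = pairs of arm-ends joined by an arc of the diagram, free = number of
   crossingless closed components.  A state is given by the set T of crossings
   receiving the A-splitting. *)
definition state_delta ::
  "'c set \<Rightarrow> ('c \<Rightarrow> 'e list \<times> nat) \<Rightarrow> ('e \<times> 'e) set \<Rightarrow> 'e set \<Rightarrow> nat \<Rightarrow> 'c set \<Rightarrow> nat" where
  "state_delta C cr arcs Ends free T =
     n_components Ends (arcs \<union> (\<Union>c\<in>T. A_split (cr c)) \<union> (\<Union>c\<in>C - T. B_split (cr c))) + free"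

definition kauffman_bracket ::
  "'c set \<Rightarrow> ('c \<Rightarrow> 'e list \<times> nat) \<Rightarrow> ('e \<times> 'e) set \<Rightarrow> 'e set \<Rightarrow> nat \<Rightarrow> 'a \<Rightarrow> 'a \<Rightarrow> 'a \<Rightarrow> 'a::field" where
  "kauffman_bracket C cr arcs Ends free A B d =
     (\<Sum>T\<in>Pow C. A ^ card T * B ^ (card C - card T)
                  * d powi (int (state_delta C cr arcs Ends free T) - 1))"

(* The medial graph has one arc per dart h, running around vert h from the
   crossing on the edge of h to the crossing on the edge of sigma h.  Its end at
   the crossing of h is (h, True) ("left of h"), its end at the crossing of
   sigma h is (h, False).
   Regions 0 and 2 (between the two arms at h, resp. at alpha h) contain the
   vertices vert h, vert (alpha h) and are black; regions 1, 3 are white.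
   --------------------------------------------------------------------- *)

definition medial_arms :: "('d \<Rightarrow> 'd) \<Rightarrow> ('d \<Rightarrow> 'd) \<Rightarrow> 'd \<Rightarrow> ('d \<times> bool) list" where
  "medial_arms alpha sigma h =
     [(h, True), (inv sigma h, False), (alpha h, True), (inv sigma (alpha h), False)]"

definition medial_black :: "nat \<Rightarrow> bool" where
  "medial_black j = even j"

(* overcrossing chosen so that its counterclockwise rotation sweeps the black regions *)
definition natural_over :: "(nat \<Rightarrow> bool) \<Rightarrow> nat" where
  "natural_over black = (if black 0 \<and> black 2 then 0 else 1)"

definition medial_crossing :: "('d \<Rightarrow> 'd) \<Rightarrow> ('d \<Rightarrow> 'd) \<Rightarrow> 'd set \<Rightarrow> ('d \<times> bool) list \<times> nat" where
  "medial_crossing alpha sigma e = (medial_arms alpha sigma (SOME h. h \<in> e), natural_over medial_black)"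

(* Kauffman bracket of the natural diagram of L_G; each vertex without darts
   contributes a crossingless circle of the medial graph around it *)
definition medial_bracket ::
  "'v set \<Rightarrow> 'd set \<Rightarrow> ('d \<Rightarrow> 'v) \<Rightarrow> ('d \<Rightarrow> 'd) \<Rightarrow> ('d \<Rightarrow> 'd) \<Rightarrow> 'a \<Rightarrow> 'a \<Rightarrow> 'a \<Rightarrow> 'a::field" where
  "medial_bracket V D vert alpha sigma A B d =
     kauffman_bracket (rg_edges alpha D) (medial_crossing alpha sigma)
       {((h, True), (h, False)) | h. h \<in> D} (D \<times> UNIV)
       (card {v \<in> V. \<forall>h\<in>D. vert h \<noteq> v}) A B d"

end

theory Submission
  imports Defs "HOL-Combinatorics.Orbits"
begin

(* Expanding the bracket over states, a state is determined by the spanning subgraph S whose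
   edges carry the A-splittings.  Its state curve is traced dart by dart: after the medial arc of
   dart y it continues along the arc of alpha (sigma y) if sigma y is in S, and along the arc of
   sigma y otherwise.  The orbits of this permutation are the state circles.  Those meeting S
   correspond, via the first return to S, to the boundary components of S, because restr_rot
   sigma S is the first-return map of sigma to S; those missing S consist of the darts around a
   vertex isolated in S.  Counting also the free circles around dart-less vertices, the number of
   state circles is bc(S), and the state monomial A^e(S) B^(e(G)-e(S)) d^(bc(S)-1) is the
   prefactor times the Bollobas-Riordan monomial of S at (Bd/A, Ad/B, 1/d). *)

lemma card_image_eq_if_same_fibres:
  assumes "\<And>x y. x \<in> X \<Longrightarrow> y \<in> X \<Longrightarrow> f x = f y \<longleftrightarrow> g x = g y"
  shows "card (f ` X) = card (g ` X)"
proof -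
  define h where "h = f \<circ> inv_into X g"
  have "h (g x) = f x" if "x \<in> X" for x
    using assms that by (simp add: h_def inv_into_into f_inv_into_f)
  then have "f ` X = h ` g ` X"
    by (simp add: image_image)
  moreover have "inj_on h (g ` X)"
    using assms by (auto simp: inj_on_def h_def inv_into_into f_inv_into_f)
  ultimately show ?thesis by (simp add: card_image)
qed

lemma funpow_comp_conj: "((f \<circ> g) ^^ n) (f x) = f (((g \<circ> f) ^^ n) x)"
  by (induction n) auto

lemma powi_rescaled_monomial:
  fixes A B d :: "'a::field"
  assumes nz: "A \<noteq> 0" "B \<noteq> 0" "d \<noteq> 0" and "rG + kG = rF + kF"
  shows "A powi rG * B powi nG * d powi (kG - 1)
       * ((B * d / A) powi (rG - rF) * (A * d / B) powi nF * (1 / d) powi (kF - b + nF))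
       = A powi (rF + nF) * B powi (rG + nG - rF - nF) * d powi (b - 1)"
proof -
  define x where "x = rG - rF"
  define z where "z = kF - b + nF"
  have "A powi rG * B powi nG * d powi (kG - 1)
       * ((B * d / A) powi x * (A * d / B) powi nF * (1 / d) powi z)
      = (A powi rG * A powi nF / A powi x) * (B powi nG * B powi x / B powi nF)
       * (d powi (kG - 1) * d powi x * d powi nF / d powi z)"
    using nz by (simp add: power_int_mult_distrib power_int_divide_distrib field_simps)
  also have "\<dots> = A powi (rG + nF - x) * B powi (nG + x - nF) * d powi (kG - 1 + x + nF - z)"
    using nz by (simp add: power_int_add power_int_diff)
  also have "\<dots> = A powi (rF + nF) * B powi (rG + nG - rF - nF) * d powi (b - 1)"
    using assms(4) by (simp add: x_def z_def algebra_simps)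
  finally show ?thesis unfolding x_def z_def .
qed

section \<open>Orbits of first-return maps\<close>

lemma orbit_eq_of_mem:
  assumes "permutation f" "y \<in> orbit f x"
  shows "orbit f y = orbit f x"
  by (rule orbit_cyclic_eq3[OF cyclic_on_orbit'[OF assms(1)] assms(2)])

lemma restr_rot_eqI:
  assumes "0 < m" "(f ^^ m) x \<in> S" "\<forall>j. 0 < j \<and> j < m \<longrightarrow> (f ^^ j) x \<notin> S"
  shows "restr_rot f S x = (f ^^ m) x"
proof -
  have "(LEAST m. 0 < m \<and> (f ^^ m) x \<in> S) = m"
  proof (rule Least_equality)
    show "0 < m \<and> (f ^^ m) x \<in> S"
      using assms(1,2) by simp
    fix j assume "0 < j \<and> (f ^^ j) x \<in> S"
    then have "\<not> j < m"
      using assms(3) by blast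
    then show "m \<le> j" by simp
  qed
  then show ?thesis unfolding restr_rot_def by simp
qed

lemma restr_rot_first_return:
  assumes "permutation f" "x \<in> S"
  obtains m where "0 < m" "restr_rot f S x = (f ^^ m) x" "(f ^^ m) x \<in> S"
    "\<forall>j. 0 < j \<and> j < m \<longrightarrow> (f ^^ j) x \<notin> S"
proof -
  obtain p where p: "0 < p" "(f ^^ p) x = x"
    using permutation_self[OF assms(1)] by blast
  define m where "m = (LEAST m. 0 < m \<and> (f ^^ m) x \<in> S)"
  have m: "0 < m \<and> (f ^^ m) x \<in> S"
    unfolding m_def by (rule LeastI[of _ p]) (simp add: p assms(2))
  moreover have before: "\<forall>j. 0 < j \<and> j < m \<longrightarrow> (f ^^ j) x \<notin> S"
    unfolding m_def using not_less_Least by blast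
  ultimately have "restr_rot f S x = (f ^^ m) x"
    by (intro restr_rot_eqI) auto
  with m before show thesis
    using that by blast
qed

lemma orbit_restr_rot_subset:
  assumes f: "permutation f" and x: "x \<in> S"
  shows "orbit (restr_rot f S) x \<subseteq> orbit f x \<inter> S"
proof
  have return: "restr_rot f S y \<in> orbit f y \<inter> S" if y: "y \<in> S" for y
  proof -
    obtain m where "0 < m" "restr_rot f S y = (f ^^ m) y" "(f ^^ m) y \<in> S"
      using restr_rot_first_return[OF f y] by blast
    then show ?thesis unfolding orbit_altdef by auto
  qed
  fix y assume "y \<in> orbit (restr_rot f S) x"
  then show "y \<in> orbit f x \<inter> S"
  proof induction
    case base
    show ?case using return[OF x] .
  next
    case (step y)
    then show ?case
      using return[of y] orbit_trans[of "restr_rot f S y" f y x] by blast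
  qed
qed

lemma funpow_in_orbit_restr_rot:
  assumes f: "permutation f" and "x \<in> S" "0 < n" "(f ^^ n) x \<in> S"
  shows "(f ^^ n) x \<in> orbit (restr_rot f S) x"
  using assms(2-4)
proof (induction n arbitrary: x rule: less_induct)
  case (less n x)
  obtain m where m: "0 < m" "restr_rot f S x = (f ^^ m) x" "(f ^^ m) x \<in> S"
    "\<forall>j. 0 < j \<and> j < m \<longrightarrow> (f ^^ j) x \<notin> S"
    using restr_rot_first_return[OF f less.prems(1)] by blast
  with less.prems(2,3) have "\<not> n < m" by blast
  then have "(f ^^ n) x = (f ^^ (n - m + m)) x" by simp
  also have "\<dots> = (f ^^ (n - m)) (restr_rot f S x)"
    by (simp only: m(2) funpow_add comp_apply)
  finally have n: "(f ^^ n) x = (f ^^ (n - m)) (restr_rot f S x)" .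
  show ?case
  proof (cases "m = n")
    case True
    then show ?thesis using n by (simp add: orbit.base)
  next
    case False
    then have "(f ^^ n) x \<in> orbit (restr_rot f S) (restr_rot f S x)"
      using less.IH[of "n - m" "restr_rot f S x"] n m(1-3) less.prems(2,3) \<open>\<not> n < m\<close> by simp
    then show ?thesis by (rule orbit_subset)
  qed
qed

lemma orbit_restr_rot:
  assumes f: "permutation f" and x: "x \<in> S"
  shows "orbit (restr_rot f S) x = orbit f x \<inter> S"
proof
  show "orbit f x \<inter> S \<subseteq> orbit (restr_rot f S) x"
    using funpow_in_orbit_restr_rot[OF f x] by (auto simp: orbit_altdef)
qed (rule orbit_restr_rot_subset[OF f x])

lemma orbit_Int_eq_iff:
  assumes "permutation f" "x \<in> S" "y \<in> S"
  shows "orbit f x \<inter> S = orbit f y \<inter> S \<longleftrightarrow> orbit f x = orbit f y"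
proof
  assume "orbit f x \<inter> S = orbit f y \<inter> S"
  then have "x \<in> orbit f y"
    using permutation_self_in_orbit[OF assms(1), of x] assms(2) by blast
  then show "orbit f x = orbit f y"
    by (rule orbit_eq_of_mem[OF assms(1)])
qed simp

lemma n_components_cong:
  "R \<union> R\<inverse> = Q \<union> Q\<inverse> \<Longrightarrow> n_components X R = n_components X Q"
  unfolding n_components_def by simp

section \<open>Components of a doubled permutation\<close>

definition doubled_graph :: "'a set \<Rightarrow> ('a \<Rightarrow> 'a) \<Rightarrow> (('a \<times> bool) \<times> ('a \<times> bool)) set" where
  "doubled_graph D f = {((h, True), (h, False)) | h. h \<in> D} \<union> {((h, False), (f h, True)) | h. h \<in> D}"

lemma doubled_graph_edge_cases:
  assumes "(p, q) \<in> doubled_graph D f \<union> (doubled_graph D f)\<inverse>"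
  shows "fst q = fst p \<or> fst q = f (fst p) \<or> fst p = f (fst q)"
  using assms unfolding doubled_graph_def by auto

lemma doubled_graph_connects_ends:
  "h \<in> D \<Longrightarrow> ((h, b), (h, b')) \<in> (doubled_graph D f \<union> (doubled_graph D f)\<inverse>)\<^sup>*"
  unfolding doubled_graph_def by (cases b; cases b') (auto intro: r_into_rtrancl)

lemma doubled_graph_connects_orbit:
  assumes f: "f permutes D" and h: "h \<in> D"
  shows "((h, b), ((f ^^ n) h, b')) \<in> (doubled_graph D f \<union> (doubled_graph D f)\<inverse>)\<^sup>*"
proof (induction n arbitrary: b')
  case 0
  show ?case using doubled_graph_connects_ends[OF h] by simp
next
  case (Suc n)
  let ?y = "(f ^^ n) h"
  have y: "?y \<in> D"
    using h by (induction n) (simp_all add: permutes_in_image[OF f])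
  have "((h, b), (?y, False)) \<in> (doubled_graph D f \<union> (doubled_graph D f)\<inverse>)\<^sup>*"
    by (rule Suc.IH)
  also have "((?y, False), (f ?y, True)) \<in> (doubled_graph D f \<union> (doubled_graph D f)\<inverse>)\<^sup>*"
    using y unfolding doubled_graph_def by blast
  also have "((f ?y, True), (f ?y, b')) \<in> (doubled_graph D f \<union> (doubled_graph D f)\<inverse>)\<^sup>*"
    using y by (intro doubled_graph_connects_ends) (simp add: permutes_in_image[OF f])
  finally show ?case by simp
qed

lemma doubled_graph_component:
  assumes f: "f permutes D" "finite D" and h: "h \<in> D"
  shows "{z. ((h, b), z) \<in> (doubled_graph D f \<union> (doubled_graph D f)\<inverse>)\<^sup>*} = orbit f h \<times> UNIV"
proof (intro equalityI subsetI)
  have perm: "permutation f"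
    using permutes_imp_permutation[OF f(2,1)] .
  fix z assume "z \<in> {z. ((h, b), z) \<in> (doubled_graph D f \<union> (doubled_graph D f)\<inverse>)\<^sup>*}"
  then have "((h, b), z) \<in> (doubled_graph D f \<union> (doubled_graph D f)\<inverse>)\<^sup>*" by simp
  then have "orbit f (fst z) = orbit f h"
  proof (induction rule: rtrancl_induct)
    case (step y z)
    have "orbit f (fst z) = orbit f (fst y)"
      using doubled_graph_edge_cases[OF step(2)] permutation_orbit_step[OF perm] by metis
    with step.IH show ?case by simp
  qed simp
  then have "fst z \<in> orbit f h"
    using permutation_self_in_orbit[OF perm, of "fst z"] by simp
  then show "z \<in> orbit f h \<times> UNIV"
    by (simp add: mem_Times_iff)
next
  fix z :: "'a \<times> bool" assume "z \<in> orbit f h \<times> UNIV"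
  then show "z \<in> {z. ((h, b), z) \<in> (doubled_graph D f \<union> (doubled_graph D f)\<inverse>)\<^sup>*}"
    using doubled_graph_connects_orbit[OF f(1) h]
    by (cases z) (auto simp: orbit_altdef_permutation[OF permutes_imp_permutation[OF f(2,1)]])
qed

lemma n_components_doubled_graph:
  assumes f: "f permutes D" "finite D"
  shows "n_components (D \<times> UNIV) (doubled_graph D f) = card (orbit f ` D)"
proof -
  let ?E = "(doubled_graph D f \<union> (doubled_graph D f)\<inverse>)\<^sup>*"
  have classes: "(\<lambda>x. {y. (x, y) \<in> ?E}) ` (D \<times> UNIV) = (\<lambda>h. orbit f h \<times> UNIV) ` D"
  proof (intro equalityI image_subsetI)
    fix x assume "x \<in> D \<times> (UNIV :: bool set)"
    then show "{y. (x, y) \<in> ?E} \<in> (\<lambda>h. orbit f h \<times> UNIV) ` D"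
      using doubled_graph_component[OF f] by (cases x) auto
  next
    fix h assume "h \<in> D"
    then show "orbit f h \<times> UNIV \<in> (\<lambda>x. {y. (x, y) \<in> ?E}) ` (D \<times> UNIV)"
      using doubled_graph_component[OF f, of h True] by force
  qed
  have "n_components (D \<times> UNIV) (doubled_graph D f) = card ((\<lambda>h. orbit f h \<times> (UNIV :: bool set)) ` D)"
    unfolding n_components_def classes ..
  also have "\<dots> = card (orbit f ` D)"
    by (subst image_image[symmetric], rule card_image) (auto simp: inj_on_def Times_eq_cancel2)
  finally show ?thesis .
qed

section \<open>State circles of the medial link diagram\<close>

locale ribbon_graph_map =
  fixes V :: "'v set" and D :: "'d set" and vert :: "'d \<Rightarrow> 'v" and alpha sigma :: "'d \<Rightarrow> 'd"
  assumes ribbon_graph: "ribbon_graph V D vert alpha sigma"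
begin

lemma finite_V: "finite V"
  and finite_D: "finite D"
  and alpha_permutes: "alpha permutes D"
  and sigma_permutes: "sigma permutes D"
  and alpha_alpha: "h \<in> D \<Longrightarrow> alpha (alpha h) = h"
  and vert_in_V: "h \<in> D \<Longrightarrow> vert h \<in> V"
  and vert_sigma: "h \<in> D \<Longrightarrow> vert (sigma h) = vert h"
  and sigma_transitive_at_vertex: "h \<in> D \<Longrightarrow> h' \<in> D \<Longrightarrow> vert h = vert h' \<Longrightarrow> \<exists>n. (sigma ^^ n) h = h'"
  using ribbon_graph unfolding ribbon_graph_def by auto

lemma alpha_in_D: "h \<in> D \<Longrightarrow> alpha h \<in> D"
  by (simp add: permutes_in_image[OF alpha_permutes])

lemma sigma_permutation: "permutation sigma"
  using permutes_imp_permutation[OF finite_D sigma_permutes] .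

lemma sigma_funpow_at_vertex: "h \<in> D \<Longrightarrow> (sigma ^^ n) h \<in> D \<and> vert ((sigma ^^ n) h) = vert h"
  by (induction n) (auto simp: permutes_in_image[OF sigma_permutes] vert_sigma)

lemma darts_at_vertex: "h \<in> D \<Longrightarrow> {(sigma ^^ n) h | n. True} = {h' \<in> D. vert h' = vert h}"
  using sigma_funpow_at_vertex sigma_transitive_at_vertex by fastforce

definition state_succ :: "'d set \<Rightarrow> 'd \<Rightarrow> 'd" where
  "state_succ S = perm_restrict alpha S \<circ> sigma"

lemma medial_crossing_splits:
  assumes "h \<in> D"
  shows "A_split (medial_crossing alpha sigma {h, alpha h})
           = {((inv sigma h, False), (alpha h, True)), ((inv sigma (alpha h), False), (h, True))}"
    and "B_split (medial_crossing alpha sigma {h, alpha h})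
           = {((h, True), (inv sigma h, False)), ((alpha h, True), (inv sigma (alpha h), False))}"
  using someI[of "\<lambda>x. x \<in> {h, alpha h}" h] alpha_alpha[OF assms]
  by (auto simp: A_split_def B_split_def medial_crossing_def join_regions_def medial_arms_def
      natural_over_def medial_black_def)

context
  fixes S assumes S: "S \<in> spanning_subgraphs alpha D"
begin

lemma S_subset_D: "S \<subseteq> D"
  and alpha_in_S: "h \<in> S \<Longrightarrow> alpha h \<in> S"
  using S unfolding spanning_subgraphs_def by auto

lemma alpha_image_S: "alpha ` S = S"
proof
  show "S \<subseteq> alpha ` S"
  proof
    fix h assume "h \<in> S"
    then have "h = alpha (alpha h)" "alpha h \<in> S"
      using alpha_alpha S_subset_D alpha_in_S by auto
    then show "h \<in> alpha ` S" by blast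
  qed
qed (use alpha_in_S in blast)

lemma state_succ_permutes: "state_succ S permutes D"
proof -
  have "bij_betw alpha S S"
    using alpha_image_S permutes_inj_on[OF alpha_permutes] by (simp add: bij_betw_def)
  then have "bij_betw (perm_restrict alpha S) S S"
    by (rule bij_betw_cong[THEN iffD1, rotated]) (simp add: perm_restrict_simps)
  then have "perm_restrict alpha S permutes S"
    by (rule bij_imp_permutes) (simp add: perm_restrict_simps)
  then have "perm_restrict alpha S permutes D"
    using permutes_subset S_subset_D by blast
  then show ?thesis
    unfolding state_succ_def using permutes_compose[OF sigma_permutes] by blast
qed

lemma state_succ_permutation: "permutation (state_succ S)"
  using permutes_imp_permutation[OF finite_D state_succ_permutes] .

lemma state_succ_funpow_avoiding_S:
  assumes "\<forall>j. 0 < j \<and> j \<le> n \<longrightarrow> (sigma ^^ j) y \<notin> S"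
  shows "(state_succ S ^^ n) y = (sigma ^^ n) y"
  using assms by (induction n) (auto simp: state_succ_def perm_restrict_simps)

lemma restr_rot_state_succ:
  assumes x: "x \<in> S"
  shows "restr_rot (state_succ S) S x = alpha (restr_rot sigma S x)"
proof -
  obtain m where m: "0 < m" "restr_rot sigma S x = (sigma ^^ m) x" "(sigma ^^ m) x \<in> S"
    "\<forall>j. 0 < j \<and> j < m \<longrightarrow> (sigma ^^ j) x \<notin> S"
    using restr_rot_first_return[OF sigma_permutation x] by blast
  have below: "(state_succ S ^^ j) x = (sigma ^^ j) x" if "j < m" for j
    using m(4) that by (intro state_succ_funpow_avoiding_S) auto
  obtain i where i: "m = Suc i"
    using m(1) gr0_implies_Suc by blast
  have "(state_succ S ^^ m) x = alpha ((sigma ^^ m) x)"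
    using below[of i] m(3) i by (simp add: state_succ_def perm_restrict_simps)
  moreover have "\<forall>j. 0 < j \<and> j < m \<longrightarrow> (state_succ S ^^ j) x \<notin> S"
    using below m(4) by simp
  ultimately have "restr_rot (state_succ S) S x = alpha ((sigma ^^ m) x)"
    using restr_rot_eqI[OF m(1), of "state_succ S" x S] alpha_in_S[OF m(3)] by simp
  then show ?thesis
    using m(2) by simp
qed

lemma orbit_alpha_restr_rot:
  assumes x: "x \<in> S"
  shows "orbit (alpha \<circ> restr_rot sigma S) x = orbit (state_succ S) x \<inter> S"
proof -
  have "restr_rot sigma S y \<in> S" if "y \<in> S" for y
    using restr_rot_first_return[OF sigma_permutation that] by metis
  then have "orbit (alpha \<circ> restr_rot sigma S) x = orbit (restr_rot (state_succ S) S) x"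
    using x by (intro orbit_cong0[where A = S]) (auto simp: alpha_in_S restr_rot_state_succ)
  also have "\<dots> = orbit (state_succ S) x \<inter> S"
    by (rule orbit_restr_rot[OF state_succ_permutation x])
  finally show ?thesis .
qed

lemma alpha_image_face:
  assumes h: "h \<in> S"
  shows "alpha ` {((restr_rot sigma S \<circ> alpha) ^^ n) h | n. True} = orbit (state_succ S) (alpha h) \<inter> S"
proof -
  have "alpha h \<in> orbit (alpha \<circ> restr_rot sigma S) (alpha h)"
    using orbit_alpha_restr_rot alpha_in_S[OF h] permutation_self_in_orbit[OF state_succ_permutation]
    by simp
  then have "orbit (alpha \<circ> restr_rot sigma S) (alpha h)
      = {((alpha \<circ> restr_rot sigma S) ^^ n) (alpha h) | n. True}"
    by (rule orbit_altdef_self_in)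
  also have "\<dots> = alpha ` {((restr_rot sigma S \<circ> alpha) ^^ n) h | n. True}"
    unfolding funpow_comp_conj by blast
  finally show ?thesis
    using orbit_alpha_restr_rot[OF alpha_in_S[OF h]] by simp
qed

lemma card_faces_eq_card_orbits:
  "card ((\<lambda>h. {((restr_rot sigma S \<circ> alpha) ^^ n) h | n. True}) ` S) = card (orbit (state_succ S) ` S)"
proof -
  let ?face = "\<lambda>h. {((restr_rot sigma S \<circ> alpha) ^^ n) h | n. True}"
  have "?face h = ?face h' \<longleftrightarrow> orbit (state_succ S) (alpha h) = orbit (state_succ S) (alpha h')"
    if "h \<in> S" "h' \<in> S" for h h'
  proof -
    have "?face h = ?face h' \<longleftrightarrow> alpha ` ?face h = alpha ` ?face h'"
      using permutes_inj[OF alpha_permutes] by (simp add: inj_image_eq_iff)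
    also have "\<dots> \<longleftrightarrow> orbit (state_succ S) (alpha h) \<inter> S = orbit (state_succ S) (alpha h') \<inter> S"
      using alpha_image_face[OF that(1)] alpha_image_face[OF that(2)] by simp
    also have "\<dots> \<longleftrightarrow> orbit (state_succ S) (alpha h) = orbit (state_succ S) (alpha h')"
      using that by (intro orbit_Int_eq_iff state_succ_permutation alpha_in_S)
    finally show ?thesis .
  qed
  then have "card (?face ` S) = card ((\<lambda>h. orbit (state_succ S) (alpha h)) ` S)"
    by (rule card_image_eq_if_same_fibres)
  also have "\<dots> = card (orbit (state_succ S) ` S)"
    by (simp add: image_image[symmetric] alpha_image_S)
  finally show ?thesis .
qed

lemma orbit_state_succ_at_unused_vertex:
  assumes y: "y \<in> D" and unused: "\<forall>h\<in>S. vert h \<noteq> vert y"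
  shows "orbit (state_succ S) y = {h \<in> D. vert h = vert y}"
proof -
  have "(state_succ S ^^ n) y = (sigma ^^ n) y" for n
    using sigma_funpow_at_vertex[OF y] unused by (intro state_succ_funpow_avoiding_S) blast
  then have "orbit (state_succ S) y = {(sigma ^^ n) y | n. True}"
    by (simp add: orbit_altdef_permutation[OF state_succ_permutation])
  also have "\<dots> = {h \<in> D. vert h = vert y}"
    by (rule darts_at_vertex[OF y])
  finally show ?thesis .
qed

lemma orbit_state_succ_meets_S:
  assumes "y \<in> D" "(sigma ^^ n) y \<in> S"
  shows "\<exists>s\<in>S. orbit (state_succ S) y = orbit (state_succ S) s"
  using assms
proof (induction n arbitrary: y)
  case 0
  then show ?case by auto
next
  case (Suc n)
  have step: "orbit (state_succ S) (state_succ S y) = orbit (state_succ S) y"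
    by (rule permutation_orbit_step[OF state_succ_permutation])
  show ?case
  proof (cases "sigma y \<in> S")
    case True
    then have "state_succ S y \<in> S"
      by (simp add: state_succ_def perm_restrict_simps alpha_in_S)
    with step show ?thesis by metis
  next
    case False
    then have "state_succ S y = sigma y"
      by (simp add: state_succ_def perm_restrict_simps)
    moreover have "(sigma ^^ n) (sigma y) \<in> S"
      using Suc.prems(2) by (simp only: funpow_Suc_right comp_apply)
    moreover have "sigma y \<in> D"
      using Suc.prems(1) by (simp add: permutes_in_image[OF sigma_permutes])
    ultimately show ?thesis
      using Suc.IH[of "sigma y"] step by simp
  qed
qed

lemma orbits_state_succ_split:
  "orbit (state_succ S) ` D
     = orbit (state_succ S) ` S \<union> orbit (state_succ S) ` {y \<in> D. \<forall>h\<in>S. vert h \<noteq> vert y}"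
proof (intro equalityI subsetI)
  fix x assume "x \<in> orbit (state_succ S) ` D"
  then obtain y where y: "y \<in> D" "x = orbit (state_succ S) y" by blast
  show "x \<in> orbit (state_succ S) ` S \<union> orbit (state_succ S) ` {y \<in> D. \<forall>h\<in>S. vert h \<noteq> vert y}"
  proof (cases "\<forall>h\<in>S. vert h \<noteq> vert y")
    case False
    then obtain h where "h \<in> S" "vert h = vert y"
      by auto
    then obtain n where "(sigma ^^ n) y = h"
      using sigma_transitive_at_vertex[of y h] y(1) S_subset_D by auto
    then obtain s where "s \<in> S" "orbit (state_succ S) y = orbit (state_succ S) s"
      using orbit_state_succ_meets_S[OF y(1)] \<open>h \<in> S\<close> by blast
    then show ?thesis
      using y(2) by blast
  qed (use y in blast)
qed (use S_subset_D in blast)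

lemma card_orbits_state_succ:
  "card (orbit (state_succ S) ` D)
     = card (orbit (state_succ S) ` S) + card (vert ` {y \<in> D. \<forall>h\<in>S. vert h \<noteq> vert y})"
proof -
  let ?O = "orbit (state_succ S)"
  let ?U = "{y \<in> D. \<forall>h\<in>S. vert h \<noteq> vert y}"
  have "?O s \<noteq> ?O y" if "s \<in> S" "y \<in> ?U" for s y
  proof
    assume "?O s = ?O y"
    then have "s \<in> {h \<in> D. vert h = vert y}"
      using that(2) orbit_state_succ_at_unused_vertex
        permutation_self_in_orbit[OF state_succ_permutation, of s] by auto
    with that show False by auto
  qed
  then have "card (?O ` D) = card (?O ` S) + card (?O ` ?U)"
    unfolding orbits_state_succ_split using finite_D S_subset_D
    by (intro card_Un_disjoint) (auto intro: finite_subset)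
  moreover have "card (?O ` ?U) = card (vert ` ?U)"
    by (rule card_image_eq_if_same_fibres) (auto simp: orbit_state_succ_at_unused_vertex)
  ultimately show ?thesis by simp
qed

lemma rg_bc_eq_card_orbits:
  "rg_bc V vert alpha sigma S = card (orbit (state_succ S) ` D) + card {v \<in> V. \<forall>h\<in>D. vert h \<noteq> v}"
proof -
  let ?U = "{y \<in> D. \<forall>h\<in>S. vert h \<noteq> vert y}"
  have "{v \<in> V. \<forall>h\<in>S. vert h \<noteq> v} = {v \<in> V. \<forall>h\<in>D. vert h \<noteq> v} \<union> vert ` ?U"
    using S_subset_D vert_in_V by auto
  moreover have "{v \<in> V. \<forall>h\<in>D. vert h \<noteq> v} \<inter> vert ` ?U = {}"
    by auto
  ultimately have "card {v \<in> V. \<forall>h\<in>S. vert h \<noteq> v} = card {v \<in> V. \<forall>h\<in>D. vert h \<noteq> v} + card (vert ` ?U)"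
    using finite_V finite_D by (simp add: card_Un_disjoint)
  then show ?thesis
    unfolding rg_bc_def card_faces_eq_card_orbits card_orbits_state_succ by simp
qed

lemma edge_in_rg_edges_iff: "h \<in> D \<Longrightarrow> {h, alpha h} \<in> rg_edges alpha S \<longleftrightarrow> h \<in> S"
  unfolding rg_edges_def using alpha_alpha alpha_in_S S_subset_D by (auto simp: doubleton_eq_iff)

lemma A_splits_medial:
  "(\<Union>c\<in>rg_edges alpha S. A_split (medial_crossing alpha sigma c))
     = (\<lambda>h. ((inv sigma h, False), (state_succ S (inv sigma h), True))) ` S"
  (is "_ = ?conn ` S")
proof -
  have "(\<Union>c\<in>rg_edges alpha S. A_split (medial_crossing alpha sigma c))
      = (\<Union>h\<in>S. {?conn h, ?conn (alpha h)})"
    unfolding rg_edges_def SUP_image comp_def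
  proof (rule SUP_cong[OF refl])
    fix h assume "h \<in> S"
    then show "A_split (medial_crossing alpha sigma {h, alpha h}) = {?conn h, ?conn (alpha h)}"
      using S_subset_D alpha_in_S permutes_inverses(1)[OF sigma_permutes]
      by (auto simp: medial_crossing_splits(1) alpha_alpha state_succ_def perm_restrict_simps)
  qed
  also have "\<dots> = ?conn ` S \<union> ?conn ` alpha ` S"
    by blast
  finally show ?thesis
    by (simp add: alpha_image_S)
qed

lemma B_splits_medial:
  "(\<Union>c\<in>rg_edges alpha D - rg_edges alpha S. B_split (medial_crossing alpha sigma c))\<inverse>
     = (\<lambda>h. ((inv sigma h, False), (state_succ S (inv sigma h), True))) ` (D - S)"
  (is "_ = ?conn ` (D - S)")
proof -
  have "rg_edges alpha D - rg_edges alpha S = (\<lambda>h. {h, alpha h}) ` (D - S)"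
    using edge_in_rg_edges_iff unfolding rg_edges_def by auto
  then have "(\<Union>c\<in>rg_edges alpha D - rg_edges alpha S. B_split (medial_crossing alpha sigma c))\<inverse>
      = (\<Union>h\<in>D - S. (B_split (medial_crossing alpha sigma {h, alpha h}))\<inverse>)"
    by (simp add: converse_UNION SUP_image comp_def)
  also have "\<dots> = (\<Union>h\<in>D - S. {?conn h, ?conn (alpha h)})"
  proof (rule SUP_cong[OF refl])
    fix h assume h: "h \<in> D - S"
    then have "alpha h \<notin> S"
      using alpha_in_S[of "alpha h"] alpha_alpha[of h] by auto
    with h show "(B_split (medial_crossing alpha sigma {h, alpha h}))\<inverse> = {?conn h, ?conn (alpha h)}"
      using permutes_inverses(1)[OF sigma_permutes]
      by (auto simp: medial_crossing_splits(2) alpha_alpha state_succ_def perm_restrict_simps)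
  qed
  also have "\<dots> = ?conn ` (D - S) \<union> ?conn ` alpha ` (D - S)"
    by blast
  also have "alpha ` (D - S) = D - S"
    using image_set_diff[OF permutes_inj[OF alpha_permutes]] alpha_image_S
      permutes_image[OF alpha_permutes] by simp
  finally show ?thesis
    by simp
qed

lemma medial_state_splits:
  "(\<Union>c\<in>rg_edges alpha S. A_split (medial_crossing alpha sigma c))
     \<union> (\<Union>c\<in>rg_edges alpha D - rg_edges alpha S. B_split (medial_crossing alpha sigma c))\<inverse>
   = (\<lambda>y. ((y, False), (state_succ S y, True))) ` D"
proof -
  have "(\<lambda>h. ((inv sigma h, False), (state_succ S (inv sigma h), True))) ` (S \<union> (D - S))
      = (\<lambda>y. ((y, False), (state_succ S y, True))) ` inv sigma ` D"
    using S_subset_D by (simp add: Un_absorb1 image_image)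
  then show ?thesis
    unfolding A_splits_medial B_splits_medial image_Un[symmetric]
      permutes_image[OF permutes_inv[OF sigma_permutes]] .
qed

lemma state_delta_medial:
  "state_delta (rg_edges alpha D) (medial_crossing alpha sigma) {((h, True), (h, False)) | h. h \<in> D}
     (D \<times> UNIV) (card {v \<in> V. \<forall>h\<in>D. vert h \<noteq> v}) (rg_edges alpha S)
   = rg_bc V vert alpha sigma S"
proof -
  have symmetric_closures: "(R \<union> P \<union> Q) \<union> (R \<union> P \<union> Q)\<inverse> = (R \<union> (P \<union> Q\<inverse>)) \<union> (R \<union> (P \<union> Q\<inverse>))\<inverse>"
    for R P Q :: "(('d \<times> bool) \<times> ('d \<times> bool)) set"
    by (simp add: converse_Un Un_ac)
  have "doubled_graph D (state_succ S)
      = {((h, True), (h, False)) | h. h \<in> D}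
        \<union> ((\<Union>c\<in>rg_edges alpha S. A_split (medial_crossing alpha sigma c))
           \<union> (\<Union>c\<in>rg_edges alpha D - rg_edges alpha S. B_split (medial_crossing alpha sigma c))\<inverse>)"
    unfolding medial_state_splits doubled_graph_def by blast
  then show ?thesis
    unfolding state_delta_def rg_bc_eq_card_orbits
    using n_components_doubled_graph[OF state_succ_permutes finite_D]
      n_components_cong[OF symmetric_closures] by simp
qed

lemma medial_state_term:
  fixes A B d :: "'a::field"
  assumes "A \<noteq> 0" "B \<noteq> 0" "d \<noteq> 0"
  shows "A ^ card (rg_edges alpha S) * B ^ (card (rg_edges alpha D) - card (rg_edges alpha S))
         * d powi (int (state_delta (rg_edges alpha D) (medial_crossing alpha sigma)
              {((h, True), (h, False)) | h. h \<in> D} (D \<times> UNIV) (card {v \<in> V. \<forall>h\<in>D. vert h \<noteq> v})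
              (rg_edges alpha S)) - 1)
       = A powi (rg_r V vert alpha D) * B powi (rg_n V vert alpha D) * d powi (int (rg_k V vert alpha D) - 1)
         * ((B * d / A) powi (rg_r V vert alpha D - rg_r V vert alpha S)
            * (A * d / B) powi (rg_n V vert alpha S)
            * (1 / d) powi (int (rg_k V vert alpha S) - int (rg_bc V vert alpha sigma S) + rg_n V vert alpha S))"
proof -
  have "card (rg_edges alpha S) \<le> card (rg_edges alpha D)"
    using S_subset_D finite_D by (intro card_mono) (auto simp: rg_edges_def)
  then have "B ^ (card (rg_edges alpha D) - card (rg_edges alpha S))
      = B powi (int (card (rg_edges alpha D)) - int (card (rg_edges alpha S)))"
    by (metis of_nat_diff power_int_of_nat)
  then show ?thesis
    unfolding state_delta_medial
    using powi_rescaled_monomial[OF assms, where rG = "rg_r V vert alpha D" and kG = "int (rg_k V vert alpha D)"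
        and rF = "rg_r V vert alpha S" and kF = "int (rg_k V vert alpha S)" and nG = "rg_n V vert alpha D"
        and nF = "rg_n V vert alpha S" and b = "int (rg_bc V vert alpha sigma S)"]
    by (simp add: rg_r_def rg_n_def)
qed

end

lemma rg_edges_eq_pair:
  assumes "c \<in> rg_edges alpha D" "x \<in> c"
  shows "c = {x, alpha x}"
proof -
  obtain h where "h \<in> D" "c = {h, alpha h}"
    using assms(1) unfolding rg_edges_def by blast
  with assms(2) show ?thesis
    using alpha_alpha by auto
qed

lemma bij_betw_rg_edges:
  "bij_betw (rg_edges alpha) (spanning_subgraphs alpha D) (Pow (rg_edges alpha D))"
proof (rule bij_betw_byWitness[where f' = Union])
  show "\<forall>S\<in>spanning_subgraphs alpha D. \<Union>(rg_edges alpha S) = S"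
    unfolding spanning_subgraphs_def rg_edges_def by blast
  show "\<forall>T\<in>Pow (rg_edges alpha D). rg_edges alpha (\<Union>T) = T"
  proof
    fix T assume "T \<in> Pow (rg_edges alpha D)"
    then have T: "\<forall>c\<in>T. \<exists>h\<in>D. c = {h, alpha h}"
      unfolding rg_edges_def by blast
    have edge: "{x, alpha x} = c" if "c \<in> T" "x \<in> c" for c x
      using rg_edges_eq_pair \<open>T \<in> Pow (rg_edges alpha D)\<close> that by blast
    show "rg_edges alpha (\<Union>T) = T"
    proof (intro equalityI subsetI)
      fix c assume "c \<in> rg_edges alpha (\<Union>T)"
      then obtain x c' where "c' \<in> T" "x \<in> c'" "c = {x, alpha x}"
        unfolding rg_edges_def by blast
      then show "c \<in> T" using edge by simp
    next
      fix c assume "c \<in> T"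
      then obtain h where "c = {h, alpha h}"
        using T by blast
      with \<open>c \<in> T\<close> show "c \<in> rg_edges alpha (\<Union>T)"
        unfolding rg_edges_def by blast
    qed
  qed
  show "rg_edges alpha ` spanning_subgraphs alpha D \<subseteq> Pow (rg_edges alpha D)"
    unfolding spanning_subgraphs_def rg_edges_def by blast
  show "Union ` Pow (rg_edges alpha D) \<subseteq> spanning_subgraphs alpha D"
  proof (intro image_subsetI)
    fix T assume T: "T \<in> Pow (rg_edges alpha D)"
    have "\<Union>T \<subseteq> D"
      using T alpha_in_D unfolding rg_edges_def by blast
    moreover have "alpha x \<in> \<Union>T" if "x \<in> \<Union>T" for x
      using that T rg_edges_eq_pair by blast
    ultimately show "\<Union>T \<in> spanning_subgraphs alpha D"
      unfolding spanning_subgraphs_def by blast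
  qed
qed

end

theorem theorem3p1:
  fixes V :: "'v set" and D :: "'d set" and vert :: "'d \<Rightarrow> 'v"
    and alpha sigma :: "'d \<Rightarrow> 'd" and A B d :: "'a::field"
  assumes "ribbon_graph V D vert alpha sigma"
    and "A \<noteq> 0" and "B \<noteq> 0" and "d \<noteq> 0"
  shows "medial_bracket V D vert alpha sigma A B d =
           A powi (rg_r V vert alpha D) * B powi (rg_n V vert alpha D)
         * d powi (int (rg_k V vert alpha D) - 1)
         * BR_poly V D vert alpha sigma (B * d / A) (A * d / B) (1 / d)"
proof -
  interpret ribbon_graph_map V D vert alpha sigma
    by (rule ribbon_graph_map.intro) (rule assms(1))
  let ?C = "rg_edges alpha D"
  let ?delta = "state_delta ?C (medial_crossing alpha sigma) {((h, True), (h, False)) | h. h \<in> D}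
    (D \<times> UNIV) (card {v \<in> V. \<forall>h\<in>D. vert h \<noteq> v})"
  let ?term = "\<lambda>T. A ^ card T * B ^ (card ?C - card T) * d powi (int (?delta T) - 1)"
  have "medial_bracket V D vert alpha sigma A B d = (\<Sum>T\<in>Pow ?C. ?term T)"
    unfolding medial_bracket_def kauffman_bracket_def ..
  also have "\<dots> = (\<Sum>S\<in>spanning_subgraphs alpha D. ?term (rg_edges alpha S))"
    by (rule sum.reindex_bij_betw[OF bij_betw_rg_edges, symmetric])
  also have "\<dots> = A powi (rg_r V vert alpha D) * B powi (rg_n V vert alpha D)
         * d powi (int (rg_k V vert alpha D) - 1)
         * BR_poly V D vert alpha sigma (B * d / A) (A * d / B) (1 / d)"
    unfolding BR_poly_def sum_distrib_left using medial_state_term[OF _ assms(2-4)]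
    by (intro sum.cong) simp_all
  finally show ?thesis .
qed

end
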